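(* For any set $\mathcal H$ of Pauli operators in $\mathcal P_n$, $\mathrm{rank}\,D^{(\mathcal H)}=\mathrm{rank}\,A^{(\mathcal H)}$.
   Context: $\mathcal P_n$ is the $n$-qubit Pauli group without phases; $\langle A,B\rangle=0$ if $A,B$ commute and $1$ otherwise. $\Gamma$ is a finite collection of supports $\gamma\subseteq\{1,\dots,n\}$; $\mathcal E_\gamma$ is the set of non-identity Paulis supported in $\gamma$, and $\mathcal E_\Gamma$ is the disjoint union of the $\mathcal E_\gamma$ (each element $e$ labeled by its support $\gamma_e$). For $h\in\mathcal P_n$, $h_\gamma$ is the restriction of $h$ to $\gamma$ (identity outside $\gamma$). $A^{(\mathcal H)}$ is the $|\mathcal H|\times|\mathcal E_\Gamma|$ matrix with $A^{(\mathcal H)}[h,e]=1$ if $h_{\gamma_e}=e$ and $0$ otherwise. $D^{(\mathcal H)}$ is the $|\mathcal H|\times|\mathcal E_\Gamma|$ matrix with $D^{(\mathcal H)}[h,e]=\langle h,e\rangle$. *)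

theory Defs
  imports Complex_Main "Jordan_Normal_Form.DL_Rank"
begin

(* Single-qubit Pauli operators, phases ignored. *)
datatype pauli1 = PI | PX | PY | PZ

(* An n-qubit Pauli (without phase): a map from qubit index to single-qubit Pauli;
   qubits are 1..n, identity outside. *)
type_synonym pauli = "nat \<Rightarrow> pauli1"

definition paulis :: "nat \<Rightarrow> pauli set" where
  "paulis n = {p. \<forall>i. i \<notin> {1..n} \<longrightarrow> p i = PI}"

definition pauli_id :: pauli where "pauli_id = (\<lambda>_. PI)"

definition supp :: "pauli \<Rightarrow> nat set" where
  "supp p = {i. p i \<noteq> PI}"

definition anticomm1 :: "pauli1 \<Rightarrow> pauli1 \<Rightarrow> bool" where
  "anticomm1 a b \<longleftrightarrow> a \<noteq> PI \<and> b \<noteq> PI \<and> a \<noteq> b"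

(* symplectic form <A,B>: 0 if A,B commute, 1 otherwise *)
definition symp :: "pauli \<Rightarrow> pauli \<Rightarrow> real" where
  "symp A B = (if even (card {i. anticomm1 (A i) (B i)}) then 0 else 1)"

definition restrict_to :: "pauli \<Rightarrow> nat set \<Rightarrow> pauli" where
  "restrict_to h \<gamma> = (\<lambda>i. if i \<in> \<gamma> then h i else PI)"

definition E_supp :: "nat set \<Rightarrow> pauli set" where
  "E_supp \<gamma> = {e. e \<noteq> pauli_id \<and> supp e \<subseteq> \<gamma>}"

(* E_Gamma: disjoint union, each element labelled by its support gamma *)
definition E_Gamma :: "nat set set \<Rightarrow> (nat set \<times> pauli) set" where
  "E_Gamma \<Gamma> = (SIGMA \<gamma>:\<Gamma>. E_supp \<gamma>)"

(* Enumerate a finite set as a list (order irrelevant for rank). *)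
definition enum_set :: "'a set \<Rightarrow> 'a list" where
  "enum_set S = (SOME xs. distinct xs \<and> set xs = S)"

definition mat_of_fun :: "'r set \<Rightarrow> 'c set \<Rightarrow> ('r \<Rightarrow> 'c \<Rightarrow> 'a) \<Rightarrow> 'a mat" where
  "mat_of_fun R C f =
     (let rs = enum_set R; cs = enum_set C
      in mat (length rs) (length cs) (\<lambda>(i, j). f (rs ! i) (cs ! j)))"

definition A_mat :: "pauli set \<Rightarrow> nat set set \<Rightarrow> real mat" where
  "A_mat H \<Gamma> = mat_of_fun H (E_Gamma \<Gamma>)
     (\<lambda>h (\<gamma>, e). if restrict_to h \<gamma> = e then 1 else 0)"

definition D_mat :: "pauli set \<Rightarrow> nat set set \<Rightarrow> real mat" where
  "D_mat H \<Gamma> = mat_of_fun H (E_Gamma \<Gamma>) (\<lambda>h (\<gamma>, e). symp h e)"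

definition mat_rank :: "real mat \<Rightarrow> nat" where
  "mat_rank M = vec_space.rank (dim_row M) M"

end

theory Submission
  imports Defs
begin

text \<open>For a support \<open>\<gamma>\<close>, the functions \<open>\<chi>\<^sub>x(e) = (-1)^\<langle>x,e\<rangle> = 1 - 2\<langle>x,e\<rangle>\<close>
  on the Paulis supported in \<open>\<gamma>\<close> are orthogonal characters,
  \<open>\<Sum>\<^sub>e \<chi>\<^sub>g(e) \<chi>\<^sub>f(e) = 4^|\<gamma>| [g = f]\<close>, since the sum factors over the qubits of \<open>\<gamma>\<close>.
  As \<open>\<langle>h,e\<rangle> = \<langle>h\<^sub>\<gamma>,e\<rangle>\<close> for \<open>e \<in> \<E>\<^sub>\<gamma>\<close>, we get \<open>D = A M\<close> with \<open>M\<close> block diagonal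
  with blocks \<open>(\<langle>e,f\<rangle>)\<close>, \<open>e, f \<in> \<E>\<^sub>\<gamma>\<close>; orthogonality gives \<open>A = D M'\<close> with blocks
  \<open>((4\<langle>e,f\<rangle> - 2) / 4^|\<gamma>|)\<close>. So \<open>A\<close> and \<open>D\<close> have the same column space.\<close>

lemma enum_set:
  assumes "finite S"
  shows "distinct (enum_set S)" "set (enum_set S) = S"
proof -
  have "distinct (enum_set S) \<and> set (enum_set S) = S"
    unfolding enum_set_def by (rule someI_ex) (use finite_distinct_list[OF assms] in blast)
  then show "distinct (enum_set S)" "set (enum_set S) = S" by auto
qed

lemma sum_enum_set:
  assumes "finite S"
  shows "(\<Sum>k = 0..<length (enum_set S). F (enum_set S ! k)) = (\<Sum>x\<in>S. F x)"
proof -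
  have "bij_betw ((!) (enum_set S)) {0..<length (enum_set S)} S"
    using bij_betw_nth[of "enum_set S"] enum_set[OF assms] by (simp add: atLeast0LessThan)
  then show ?thesis by (rule sum.reindex_bij_betw)
qed

lemma mat_of_fun_mult:
  fixes f g :: "_ \<Rightarrow> _ \<Rightarrow> 'a::semiring_0"
  assumes "finite R" "finite K" "finite C"
    and "\<And>r c. r \<in> R \<Longrightarrow> c \<in> C \<Longrightarrow> h r c = (\<Sum>k\<in>K. f r k * g k c)"
  shows "mat_of_fun R C h = mat_of_fun R K f * mat_of_fun K C g"
proof (rule eq_matI)
  fix i j
  assume "i < dim_row (mat_of_fun R K f * mat_of_fun K C g)"
    and "j < dim_col (mat_of_fun R K f * mat_of_fun K C g)"
  then have i: "i < length (enum_set R)" and j: "j < length (enum_set C)"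
    by (auto simp: mat_of_fun_def Let_def)
  have "enum_set R ! i \<in> R" "enum_set C ! j \<in> C"
    using nth_mem[OF i] nth_mem[OF j] enum_set(2) assms(1,3) by blast+
  then show "mat_of_fun R C h $$ (i, j) = (mat_of_fun R K f * mat_of_fun K C g) $$ (i, j)"
    using i j
    by (simp add: mat_of_fun_def Let_def scalar_prod_def assms(4)
        sum_enum_set[OF assms(2), of "\<lambda>k. f (enum_set R ! i) k * g k (enum_set C ! j)"])
qed (auto simp: mat_of_fun_def Let_def)

definition block_diag :: "('i \<Rightarrow> 'e \<Rightarrow> 'e \<Rightarrow> 'a::zero) \<Rightarrow> 'i \<times> 'e \<Rightarrow> 'i \<times> 'e \<Rightarrow> 'a" where
  "block_diag K = (\<lambda>(\<gamma>, e) (\<gamma>', f). if \<gamma> = \<gamma>' then K \<gamma> e f else 0)"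

lemma mat_of_fun_mult_block_diag:
  fixes K :: "_ \<Rightarrow> _ \<Rightarrow> _ \<Rightarrow> 'a::semiring_0"
  assumes "finite R" "finite \<Gamma>" "\<forall>\<gamma>\<in>\<Gamma>. finite (B \<gamma>)"
    and "\<And>r \<gamma> f. r \<in> R \<Longrightarrow> \<gamma> \<in> \<Gamma> \<Longrightarrow> f \<in> B \<gamma> \<Longrightarrow> P r (\<gamma>, f) = (\<Sum>e\<in>B \<gamma>. Q r (\<gamma>, e) * K \<gamma> e f)"
  shows "mat_of_fun R (Sigma \<Gamma> B) P
           = mat_of_fun R (Sigma \<Gamma> B) Q * mat_of_fun (Sigma \<Gamma> B) (Sigma \<Gamma> B) (block_diag K)"
proof (rule mat_of_fun_mult)
  show "finite (Sigma \<Gamma> B)" "finite (Sigma \<Gamma> B)"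
    using assms(2,3) by (simp_all add: finite_SigmaI)
  fix r c assume r: "r \<in> R" and "c \<in> Sigma \<Gamma> B"
  then obtain \<gamma> f where c: "c = (\<gamma>, f)" "\<gamma> \<in> \<Gamma>" "f \<in> B \<gamma>" by auto
  have "(\<Sum>k\<in>Sigma \<Gamma> B. Q r k * block_diag K k c)
      = (\<Sum>\<gamma>'\<in>\<Gamma>. \<Sum>e\<in>B \<gamma>'. Q r (\<gamma>', e) * block_diag K (\<gamma>', e) c)"
    using assms(2,3) by (simp add: sum.Sigma)
  also have "\<dots> = (\<Sum>\<gamma>'\<in>\<Gamma>. if \<gamma>' = \<gamma> then \<Sum>e\<in>B \<gamma>'. Q r (\<gamma>', e) * K \<gamma>' e f else 0)"
    by (rule sum.cong) (auto simp: block_diag_def c(1))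
  also have "\<dots> = P r c"
    using assms(2) c by (simp add: assms(4)[OF r c(2,3)] sum.delta')
  finally show "P r c = (\<Sum>k\<in>Sigma \<Gamma> B. Q r k * block_diag K k c)" ..
qed (use assms(1) in auto)

lemma col_space_mult_subset:
  fixes A :: "'a::field mat"
  assumes A: "A \<in> carrier_mat nr k" and M: "M \<in> carrier_mat k k'"
  shows "vec_space.col_space nr (A * M) \<subseteq> vec_space.col_space nr A"
proof
  fix y assume "y \<in> vec_space.col_space nr (A * M)"
  moreover have "dim_col (A * M) = k'" using M by simp
  ultimately obtain x where x: "x \<in> carrier_vec k'" and y: "y = (A * M) *\<^sub>v x"
    using vec_space.col_space_eq[OF mult_carrier_mat[OF A M]] by auto
  have "y = A *\<^sub>v (M *\<^sub>v x)" "M *\<^sub>v x \<in> carrier_vec k"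
    using A M x y by (auto simp: assoc_mult_mat_vec)
  then show "y \<in> vec_space.col_space nr A"
    using vec_space.col_space_eq[OF A] A by auto
qed

lemma rank_eq_if_mutual_factors:
  fixes A :: "'a::field mat"
  assumes "A \<in> carrier_mat nr k" "M \<in> carrier_mat k k" "M' \<in> carrier_mat k k"
    and "D = A * M" "A = D * M'"
  shows "vec_space.rank nr D = vec_space.rank nr A"
proof -
  have "vec_space.col_space nr D = vec_space.col_space nr A"
  proof
    show "vec_space.col_space nr D \<subseteq> vec_space.col_space nr A"
      unfolding assms(4) by (rule col_space_mult_subset[OF assms(1,2)])
    have "D \<in> carrier_mat nr k" unfolding assms(4) using assms(1,2) by simp
    then show "vec_space.col_space nr A \<subseteq> vec_space.col_space nr D"
      by (subst assms(5)) (rule col_space_mult_subset[OF _ assms(3)])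
  qed
  then show ?thesis unfolding vec_space.rank_def vec_space.col_space_def by simp
qed

definition paulis_on :: "nat set \<Rightarrow> pauli set" where
  "paulis_on \<gamma> = {p. \<forall>i. i \<notin> \<gamma> \<longrightarrow> p i = PI}"

lemma paulis_eq_paulis_on: "paulis n = paulis_on {1..n}"
  by (simp add: paulis_def paulis_on_def)

lemma paulis_on_iff_supp: "p \<in> paulis_on \<gamma> \<longleftrightarrow> supp p \<subseteq> \<gamma>"
  by (auto simp: paulis_on_def supp_def)

lemma E_supp_eq: "E_supp \<gamma> = paulis_on \<gamma> - {pauli_id}"
  by (auto simp: E_supp_def paulis_on_def supp_def)

lemma UNIV_pauli1: "(UNIV :: pauli1 set) = {PI, PX, PY, PZ}"
  using pauli1.exhaust by auto

instance pauli1 :: finite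
  by standard (simp add: UNIV_pauli1)

lemma bij_betw_restrict_paulis_on:
  "bij_betw (\<lambda>p. restrict p \<gamma>) (paulis_on \<gamma>) (\<gamma> \<rightarrow>\<^sub>E UNIV)"
proof (rule bij_betw_byWitness[where f' = "\<lambda>q i. if i \<in> \<gamma> then q i else PI"])
  show "\<forall>p\<in>paulis_on \<gamma>. (\<lambda>i. if i \<in> \<gamma> then restrict p \<gamma> i else PI) = p"
    by (auto simp: paulis_on_def)
  show "\<forall>q\<in>\<gamma> \<rightarrow>\<^sub>E UNIV. restrict (\<lambda>i. if i \<in> \<gamma> then q i else PI) \<gamma> = q"
    by (auto simp: PiE_def extensional_def)
  show "(\<lambda>q i. if i \<in> \<gamma> then q i else PI) ` (\<gamma> \<rightarrow>\<^sub>E UNIV) \<subseteq> paulis_on \<gamma>"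
    by (auto simp: paulis_on_def)
qed auto

lemma finite_paulis_on: "finite \<gamma> \<Longrightarrow> finite (paulis_on \<gamma>)"
  using bij_betw_finite[OF bij_betw_restrict_paulis_on] by (simp add: finite_PiE)

lemma finite_E_supp: "finite \<gamma> \<Longrightarrow> finite (E_supp \<gamma>)"
  by (simp add: E_supp_eq finite_paulis_on)

lemma sum_paulis_on_prod:
  fixes F :: "nat \<Rightarrow> pauli1 \<Rightarrow> 'a::comm_semiring_1"
  assumes "finite \<gamma>"
  shows "(\<Sum>e\<in>paulis_on \<gamma>. \<Prod>j\<in>\<gamma>. F j (e j)) = (\<Prod>j\<in>\<gamma>. \<Sum>a\<in>UNIV. F j a)"
proof -
  have "(\<Sum>e\<in>paulis_on \<gamma>. \<Prod>j\<in>\<gamma>. F j (e j)) = (\<Sum>e\<in>paulis_on \<gamma>. \<Prod>j\<in>\<gamma>. F j (restrict e \<gamma> j))"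
    by simp
  also have "\<dots> = (\<Sum>q\<in>\<gamma> \<rightarrow>\<^sub>E UNIV. \<Prod>j\<in>\<gamma>. F j (q j))"
    by (rule sum.reindex_bij_betw[OF bij_betw_restrict_paulis_on])
  also have "\<dots> = (\<Prod>j\<in>\<gamma>. \<Sum>a\<in>UNIV. F j a)"
    by (rule prod_sum_PiE[symmetric]) (use assms in auto)
  finally show ?thesis .
qed

definition comm_sign1 :: "pauli1 \<Rightarrow> pauli1 \<Rightarrow> real" where
  "comm_sign1 a b = (if anticomm1 a b then -1 else 1)"

lemma sum_comm_sign1_mult: "(\<Sum>c\<in>UNIV. comm_sign1 a c * comm_sign1 b c) = (if a = b then 4 else 0)"
  by (cases a; cases b) (simp_all add: UNIV_pauli1 comm_sign1_def anticomm1_def)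

lemma one_minus_two_symp:
  assumes "finite \<gamma>" "supp b \<subseteq> \<gamma>"
  shows "1 - 2 * symp a b = (\<Prod>j\<in>\<gamma>. comm_sign1 (a j) (b j))"
proof -
  let ?S = "{j. anticomm1 (a j) (b j)}"
  have "\<gamma> \<inter> ?S = ?S" using assms(2) by (auto simp: supp_def anticomm1_def)
  then have "(\<Prod>j\<in>\<gamma>. comm_sign1 (a j) (b j)) = (-1) ^ card ?S"
    by (simp add: comm_sign1_def prod.If_cases[OF assms(1)])
  then show ?thesis by (simp add: symp_def)
qed

lemma sum_paulis_on_symp_orthogonal:
  assumes "finite \<gamma>" "supp g \<subseteq> \<gamma>" "supp f \<subseteq> \<gamma>"
  shows "(\<Sum>e\<in>paulis_on \<gamma>. (1 - 2 * symp g e) * (1 - 2 * symp f e)) = (if g = f then 4 ^ card \<gamma> else 0)"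
proof -
  have "(\<Sum>e\<in>paulis_on \<gamma>. (1 - 2 * symp g e) * (1 - 2 * symp f e))
      = (\<Sum>e\<in>paulis_on \<gamma>. \<Prod>j\<in>\<gamma>. comm_sign1 (g j) (e j) * comm_sign1 (f j) (e j))"
  proof (rule sum.cong[OF refl])
    fix e assume "e \<in> paulis_on \<gamma>"
    then have "supp e \<subseteq> \<gamma>" by (simp add: paulis_on_iff_supp)
    then show "(1 - 2 * symp g e) * (1 - 2 * symp f e)
        = (\<Prod>j\<in>\<gamma>. comm_sign1 (g j) (e j) * comm_sign1 (f j) (e j))"
      by (simp add: one_minus_two_symp[OF assms(1)] prod.distrib)
  qed
  also have "\<dots> = (\<Prod>j\<in>\<gamma>. if g j = f j then 4 else 0)"
    by (subst sum_paulis_on_prod[OF assms(1)]) (simp add: sum_comm_sign1_mult)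
  also have "\<dots> = (if g = f then 4 ^ card \<gamma> else 0)"
  proof -
    have "g = f \<longleftrightarrow> (\<forall>j\<in>\<gamma>. g j = f j)"
      using assms(2,3) unfolding supp_def fun_eq_iff subset_iff mem_Collect_eq by metis
    then show ?thesis using assms(1) by (auto simp: prod_zero_iff)
  qed
  finally show ?thesis .
qed

lemma symp_pauli_id: "symp a pauli_id = 0" "symp pauli_id a = 0"
  by (simp_all add: symp_def pauli_id_def anticomm1_def)

lemma symp_commute: "symp a b = symp b a"
  unfolding symp_def anticomm1_def by metis

lemma supp_restrict_to: "supp (restrict_to h \<gamma>) \<subseteq> \<gamma>"
  by (auto simp: supp_def restrict_to_def)

lemma symp_restrict_to:
  assumes "supp f \<subseteq> \<gamma>"
  shows "symp (restrict_to h \<gamma>) f = symp h f"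
proof -
  have "{i. anticomm1 (restrict_to h \<gamma> i) (f i)} = {i. anticomm1 (h i) (f i)}"
    using assms by (auto simp: restrict_to_def anticomm1_def supp_def)
  then show ?thesis unfolding symp_def by simp
qed

text \<open>The summand is \<open>\<chi>\<^sub>g(e) \<chi>\<^sub>f(e) - \<chi>\<^bsub>id\<^esub>(e) \<chi>\<^sub>f(e)\<close>, which vanishes at \<open>e = id\<close>,
  so this is orthogonality applied twice.\<close>
lemma sum_E_supp_symp_mult:
  assumes "finite \<gamma>" "supp g \<subseteq> \<gamma>" "f \<in> E_supp \<gamma>"
  shows "(\<Sum>e\<in>E_supp \<gamma>. symp g e * (4 * symp e f - 2)) = (if g = f then 4 ^ card \<gamma> else 0)"
proof -
  have f: "supp f \<subseteq> \<gamma>" "f \<noteq> pauli_id" using assms(3) by (auto simp: E_supp_def)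
  have id: "pauli_id \<in> paulis_on \<gamma>" "supp pauli_id \<subseteq> \<gamma>"
    by (auto simp: paulis_on_def pauli_id_def supp_def)
  have "(\<Sum>e\<in>E_supp \<gamma>. symp g e * (4 * symp e f - 2))
      = (\<Sum>e\<in>paulis_on \<gamma>. symp g e * (4 * symp e f - 2))"
    unfolding E_supp_eq using finite_paulis_on[OF assms(1)] id(1)
    by (simp add: sum_diff1 symp_pauli_id)
  also have "\<dots> = (\<Sum>e\<in>paulis_on \<gamma>. (1 - 2 * symp g e) * (1 - 2 * symp f e))
       - (\<Sum>e\<in>paulis_on \<gamma>. (1 - 2 * symp pauli_id e) * (1 - 2 * symp f e))"
    by (simp add: sum_subtractf[symmetric] symp_pauli_id symp_commute[of _ f] algebra_simps)
  also have "\<dots> = (if g = f then 4 ^ card \<gamma> else 0)"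
    using sum_paulis_on_symp_orthogonal[OF assms(1) _ f(1)] assms(2) id(2) f(2) by simp
  finally show ?thesis .
qed

lemma symp_eq_sum_E_supp:
  assumes "finite \<gamma>" "supp f \<subseteq> \<gamma>"
  shows "symp h f = (\<Sum>e\<in>E_supp \<gamma>. (if restrict_to h \<gamma> = e then 1 else 0) * symp e f)"
proof -
  have "(\<Sum>e\<in>E_supp \<gamma>. (if restrict_to h \<gamma> = e then 1 else 0) * symp e f)
      = (\<Sum>e\<in>E_supp \<gamma>. if restrict_to h \<gamma> = e then symp e f else 0)"
    by (rule sum.cong) auto
  also have "\<dots> = (if restrict_to h \<gamma> \<in> E_supp \<gamma> then symp (restrict_to h \<gamma>) f else 0)"
    by (simp add: finite_E_supp[OF assms(1)])
  also have "\<dots> = symp (restrict_to h \<gamma>) f"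
    using supp_restrict_to[of h \<gamma>] by (auto simp: E_supp_def symp_pauli_id)
  finally show ?thesis by (simp add: symp_restrict_to[OF assms(2)])
qed

lemma indicator_restrict_to_eq_sum_E_supp:
  assumes "finite \<gamma>" "f \<in> E_supp \<gamma>"
  shows "(if restrict_to h \<gamma> = f then 1 else 0)
           = (\<Sum>e\<in>E_supp \<gamma>. symp h e * ((4 * symp e f - 2) / 4 ^ card \<gamma>))"
proof -
  have "(\<Sum>e\<in>E_supp \<gamma>. symp h e * ((4 * symp e f - 2) / 4 ^ card \<gamma>))
      = (\<Sum>e\<in>E_supp \<gamma>. symp (restrict_to h \<gamma>) e * (4 * symp e f - 2)) / 4 ^ card \<gamma>"
    unfolding sum_divide_distrib by (rule sum.cong) (auto simp: symp_restrict_to E_supp_def)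
  then show ?thesis
    using sum_E_supp_symp_mult[OF assms(1) supp_restrict_to assms(2)] by simp
qed

lemma D_mat_eq_A_mat_mult:
  assumes "finite H" "finite \<Gamma>" "\<forall>\<gamma>\<in>\<Gamma>. finite \<gamma>"
  shows "D_mat H \<Gamma> = A_mat H \<Gamma> * mat_of_fun (E_Gamma \<Gamma>) (E_Gamma \<Gamma>) (block_diag (\<lambda>_. symp))"
  unfolding D_mat_def A_mat_def E_Gamma_def
proof (rule mat_of_fun_mult_block_diag)
  fix h \<gamma> f assume "\<gamma> \<in> \<Gamma>" "f \<in> E_supp \<gamma>"
  then show "(case (\<gamma>, f) of (\<gamma>, e) \<Rightarrow> symp h e)
      = (\<Sum>e\<in>E_supp \<gamma>. (case (\<gamma>, e) of (\<gamma>, e) \<Rightarrow> if restrict_to h \<gamma> = e then 1 else 0) * symp e f)"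
    using assms(3) symp_eq_sum_E_supp by (simp add: E_supp_def)
qed (use assms in \<open>auto simp: finite_E_supp\<close>)

lemma A_mat_eq_D_mat_mult:
  assumes "finite H" "finite \<Gamma>" "\<forall>\<gamma>\<in>\<Gamma>. finite \<gamma>"
  shows "A_mat H \<Gamma> = D_mat H \<Gamma> * mat_of_fun (E_Gamma \<Gamma>) (E_Gamma \<Gamma>)
           (block_diag (\<lambda>\<gamma> e f. (4 * symp e f - 2) / 4 ^ card \<gamma>))"
  unfolding D_mat_def A_mat_def E_Gamma_def
proof (rule mat_of_fun_mult_block_diag)
  fix h \<gamma> f assume "\<gamma> \<in> \<Gamma>" "f \<in> E_supp \<gamma>"
  then show "(case (\<gamma>, f) of (\<gamma>, e) \<Rightarrow> if restrict_to h \<gamma> = e then 1 else 0)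
      = (\<Sum>e\<in>E_supp \<gamma>. (case (\<gamma>, e) of (\<gamma>, e) \<Rightarrow> symp h e) * ((4 * symp e f - 2) / 4 ^ card \<gamma>))"
    using assms(3) indicator_restrict_to_eq_sum_E_supp by simp
qed (use assms in \<open>auto simp: finite_E_supp\<close>)

theorem rank_D_mat_eq_rank_A_mat:
  assumes "finite H" "finite \<Gamma>" "\<forall>\<gamma>\<in>\<Gamma>. finite \<gamma>"
  shows "mat_rank (D_mat H \<Gamma>) = mat_rank (A_mat H \<Gamma>)"
proof -
  let ?r = "length (enum_set H)" and ?k = "length (enum_set (E_Gamma \<Gamma>))"
  have A: "A_mat H \<Gamma> \<in> carrier_mat ?r ?k"
    and M: "\<And>K. mat_of_fun (E_Gamma \<Gamma>) (E_Gamma \<Gamma>) K \<in> carrier_mat ?k ?k"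
    and "dim_row (D_mat H \<Gamma>) = ?r"
    by (simp_all add: A_mat_def D_mat_def mat_of_fun_def Let_def)
  moreover have "vec_space.rank ?r (D_mat H \<Gamma>) = vec_space.rank ?r (A_mat H \<Gamma>)"
    by (rule rank_eq_if_mutual_factors[OF A M M
          D_mat_eq_A_mat_mult[OF assms] A_mat_eq_D_mat_mult[OF assms]])
  ultimately show ?thesis
    unfolding mat_rank_def by simp
qed

theorem lemma2:
  fixes n :: nat and \<Gamma> :: "nat set set" and H :: "pauli set"
  assumes "finite \<Gamma>"
    and "\<forall>\<gamma>\<in>\<Gamma>. \<gamma> \<subseteq> {1..n}"
    and "H \<subseteq> paulis n"
  shows "mat_rank (D_mat H \<Gamma>) = mat_rank (A_mat H \<Gamma>)"
proof (rule rank_D_mat_eq_rank_A_mat)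
  show "finite H"
    using assms(3) finite_paulis_on[of "{1..n}"] by (auto simp: paulis_eq_paulis_on intro: finite_subset)
  show "\<forall>\<gamma>\<in>\<Gamma>. finite \<gamma>"
    using assms(2) finite_subset[OF _ finite_atLeastAtMost] by blast
qed (rule assms(1))

end
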